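(* In the setting where $\alpha\in(0,1)$ satisfies $\frac{1-\alpha}{1+\alpha}<\alpha^{1/2}$ and two boxes are given by $w_k=W_0/\alpha^{i+i_k}$, $h_k=H_0/\alpha^{j+j_k}$, $x_k=b_x\delta_i+(m+m_k)\delta_i$, $y_k=b_y\delta_j+(n+n_k)\delta_j$ ($k=1,2$) with $\delta_i=\frac{W_0}{\alpha^{i}}\frac{1-\alpha}{1+\alpha}$, $\delta_j=\frac{H_0}{\alpha^{j}}\frac{1-\alpha}{1+\alpha}$ and all offsets $i_k,j_k,m_k,n_k\in[-\tfrac12,\tfrac12]$: if all variables other than $i_1$ are held fixed, then the minimum of the IoU of the two boxes over $i_1\in[-\tfrac12,\tfrac12]$ is attained at $i_1=-\tfrac12$ or $i_1=\tfrac12$. *)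

theory Defs
  imports Complex_Main
begin

definition overlap1 :: "real \<Rightarrow> real \<Rightarrow> real \<Rightarrow> real \<Rightarrow> real" where
  "overlap1 c1 l1 c2 l2 =
     max 0 (min (c1 + l1/2) (c2 + l2/2) - max (c1 - l1/2) (c2 - l2/2))"

definition iou :: "real \<Rightarrow> real \<Rightarrow> real \<Rightarrow> real \<Rightarrow> real \<Rightarrow> real \<Rightarrow> real \<Rightarrow> real \<Rightarrow> real" where
  "iou x1 y1 w1 h1 x2 y2 w2 h2 =
     (let I = overlap1 x1 w1 x2 w2 * overlap1 y1 h1 y2 h2
      in I / (w1 * h1 + w2 * h2 - I))"

definition grid_iou ::
  "real \<Rightarrow> real \<Rightarrow> real \<Rightarrow> real \<Rightarrow> real \<Rightarrow> int \<Rightarrow> int \<Rightarrow> int \<Rightarrow> int \<Rightarrow>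
   real \<Rightarrow> real \<Rightarrow> real \<Rightarrow> real \<Rightarrow> real \<Rightarrow> real \<Rightarrow> real \<Rightarrow> real \<Rightarrow> real" where
  "grid_iou \<alpha> W0 H0 bx b_y i j m n i1 j1 m1 n1 i2 j2 m2 n2 =
     (let di = W0 / \<alpha> powr (real_of_int i) * ((1 - \<alpha>) / (1 + \<alpha>));
          dj = H0 / \<alpha> powr (real_of_int j) * ((1 - \<alpha>) / (1 + \<alpha>));
          w1 = W0 / \<alpha> powr (real_of_int i + i1); h1 = H0 / \<alpha> powr (real_of_int j + j1);
          w2 = W0 / \<alpha> powr (real_of_int i + i2); h2 = H0 / \<alpha> powr (real_of_int j + j2);
          x1 = bx * di + (real_of_int m + m1) * di; y1 = b_y * dj + (real_of_int n + n1) * dj;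
          x2 = bx * di + (real_of_int m + m2) * di; y2 = b_y * dj + (real_of_int n + n2) * dj
      in iou x1 y1 w1 h1 x2 y2 w2 h2)"

end

theory Submission
  imports Defs
begin

text \<open>As a function of the first box's width u, with everything else fixed, the IoU has the
  form N u / (A u - N u), where the area sum A is affine and the intersection N is a nonnegative
  multiple of max 0 (g u) with g concave. For t > 0 the superlevel set {u. t \<le> IoU} is
  {u. t * A u \<le> (1 + t) * N u}, which is convex, so the IoU is quasi-concave in the width.
  The width W0 / alpha powr (i + i1) is monotone in i1, hence the IoU is quasi-concave in i1 and
  its minimum over an interval is attained at an endpoint.\<close>

lemma min_plus_half_concave:
  fixes l a b w x C :: real
  assumes "0 \<le> l" "l \<le> 1" "w = (1 - l) * a + l * b"
  shows "(1 - l) * min (x + a/2) C + l * min (x + b/2) C \<le> min (x + w/2) C"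
proof -
  have "(1 - l) * min (x + a/2) C \<le> (1 - l) * (x + a/2)" "(1 - l) * min (x + a/2) C \<le> (1 - l) * C"
       "l * min (x + b/2) C \<le> l * (x + b/2)" "l * min (x + b/2) C \<le> l * C"
    using assms by (auto intro!: mult_left_mono)
  moreover have "(1 - l) * (x + a/2) + l * (x + b/2) = x + w/2"
    using assms(3) by (simp add: field_simps)
  moreover have "(1 - l) * C + l * C = C" by (simp add: algebra_simps)
  ultimately show ?thesis by linarith
qed

lemma max_minus_half_convex:
  fixes l a b w x C :: real
  assumes "0 \<le> l" "l \<le> 1" "w = (1 - l) * a + l * b"
  shows "max (x - w/2) C \<le> (1 - l) * max (x - a/2) C + l * max (x - b/2) C"
proof -
  have "(1 - l) * (x - a/2) \<le> (1 - l) * max (x - a/2) C" "(1 - l) * C \<le> (1 - l) * max (x - a/2) C"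
       "l * (x - b/2) \<le> l * max (x - b/2) C" "l * C \<le> l * max (x - b/2) C"
    using assms by (auto intro!: mult_left_mono)
  moreover have "(1 - l) * (x - a/2) + l * (x - b/2) = x - w/2"
    using assms(3) by (simp add: field_simps)
  moreover have "(1 - l) * C + l * C = C" by (simp add: algebra_simps)
  ultimately show ?thesis by linarith
qed

lemma overlap_core_concave:
  fixes l a b w x c' l' :: real
  defines "g \<equiv> \<lambda>u. min (x + u/2) (c' + l'/2) - max (x - u/2) (c' - l'/2)"
  assumes "0 \<le> l" "l \<le> 1" "w = (1 - l) * a + l * b"
  shows "(1 - l) * g a + l * g b \<le> g w"
  using min_plus_half_concave[OF assms(2-4), of x "c' + l'/2"]
    max_minus_half_convex[OF assms(2-4), of x "c' - l'/2"]
  unfolding g_def by (simp add: algebra_simps)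

lemma ratio_le_iff:
  fixes t N A :: real
  assumes "0 < A - N"
  shows "t \<le> N / (A - N) \<longleftrightarrow> t * A \<le> (1 + t) * N"
  using assms by (simp add: pos_le_divide_eq algebra_simps)

lemma intersection_ratio_quasiconcave:
  fixes g A :: "real \<Rightarrow> real" and c l a b w :: real
  defines "N \<equiv> \<lambda>u. c * max 0 (g u)"
  assumes "0 \<le> c" "0 \<le> l" "l \<le> 1"
    and concave: "(1 - l) * g a + l * g b \<le> g w"
    and affine: "A w = (1 - l) * A a + l * A b"
    and pos: "\<And>u. u \<in> {a, b, w} \<Longrightarrow> 0 < A u - N u"
  shows "min (N a / (A a - N a)) (N b / (A b - N b)) \<le> N w / (A w - N w)"
proof -
  define t where "t = min (N a / (A a - N a)) (N b / (A b - N b))"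
  have N0: "0 \<le> N u" for u unfolding N_def using \<open>0 \<le> c\<close> by simp
  show ?thesis
  proof (cases "t \<le> 0")
    case True
    moreover have "0 \<le> N w / (A w - N w)" using N0[of w] pos[of w] by simp
    ultimately show ?thesis unfolding t_def by linarith
  next
    case False
    have level: "t * A u \<le> (1 + t) * c * g u" if u: "u \<in> {a, b}" for u
    proof -
      have "t \<le> N u / (A u - N u)" using u unfolding t_def by auto
      then have "t * A u \<le> (1 + t) * N u" using ratio_le_iff pos u by blast
      moreover have "0 < t * A u"
        \<comment> \<open>A u > N u \<ge> 0, so on the superlevel set the overlap is positive and max 0 is inactive\<close>
        using False pos[of u] N0[of u] u by (intro mult_pos_pos) auto
      ultimately have "0 < (1 + t) * N u" by linarith
      then have "0 < N u" using False by (auto simp: zero_less_mult_iff)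
      then have "0 < g u" unfolding N_def by (auto simp: zero_less_mult_iff)
      then have "N u = c * g u" unfolding N_def by simp
      with \<open>t * A u \<le> (1 + t) * N u\<close> show ?thesis by simp
    qed
    have "t * A w = (1 - l) * (t * A a) + l * (t * A b)"
      unfolding affine by (simp add: algebra_simps)
    also have "\<dots> \<le> (1 - l) * ((1 + t) * c * g a) + l * ((1 + t) * c * g b)"
      using level \<open>0 \<le> l\<close> \<open>l \<le> 1\<close> by (intro add_mono mult_left_mono) auto
    also have "\<dots> = (1 + t) * c * ((1 - l) * g a + l * g b)"
      by (simp add: algebra_simps)
    also have "\<dots> \<le> (1 + t) * c * g w"
      using concave False \<open>0 \<le> c\<close> by (intro mult_left_mono) auto
    also have "\<dots> \<le> (1 + t) * N w"
      unfolding N_def mult.assoc using False \<open>0 \<le> c\<close> by (intro mult_left_mono) auto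
    finally show ?thesis using ratio_le_iff pos[of w] unfolding t_def by blast
  qed
qed

lemma overlap1_le_length:
  assumes "0 \<le> l1"
  shows "overlap1 c1 l1 c2 l2 \<le> l1"
  using assms unfolding overlap1_def by auto

lemma overlap1_nonneg: "0 \<le> overlap1 c1 l1 c2 l2"
  unfolding overlap1_def by simp

lemma iou_width_quasiconcave:
  fixes x1 y1 h1 x2 y2 w2 h2 a b w :: real
  assumes "a \<le> w" "w \<le> b" "0 < a" "0 < h1" "0 < w2" "0 < h2"
  shows "min (iou x1 y1 a h1 x2 y2 w2 h2) (iou x1 y1 b h1 x2 y2 w2 h2)
           \<le> iou x1 y1 w h1 x2 y2 w2 h2"
proof -
  define g where "g u = min (x1 + u/2) (x2 + w2/2) - max (x1 - u/2) (x2 - w2/2)" for u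
  define oy where "oy = overlap1 y1 h1 y2 h2"
  define A where "A u = u * h1 + w2 * h2" for u
  define N where "N u = oy * max 0 (g u)" for u
  have iou_eq: "iou x1 y1 u h1 x2 y2 w2 h2 = N u / (A u - N u)" for u
    unfolding iou_def N_def A_def g_def oy_def overlap1_def Let_def by (simp add: mult.commute)
  have pos: "0 < A u - N u" if "0 < u" for u
  proof -
    have "N u = overlap1 x1 u x2 w2 * oy"
      unfolding N_def g_def overlap1_def by simp
    also have "\<dots> \<le> u * h1"
      using that assms unfolding oy_def
      by (intro mult_mono overlap1_le_length overlap1_nonneg) auto
    finally have "N u \<le> u * h1" .
    moreover have "0 < w2 * h2" using assms by simp
    ultimately show ?thesis unfolding A_def by linarith
  qed
  obtain l where l: "0 \<le> l" "l \<le> 1" "w = (1 - l) * a + l * b"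
  proof (cases "a = b")
    case True
    then show ?thesis using that[of 0] assms by simp
  next
    case False
    with assms have "0 < b - a" by simp
    define l where "l = (w - a) / (b - a)"
    have "l * (b - a) = w - a" unfolding l_def using \<open>0 < b - a\<close> by simp
    then have "w = (1 - l) * a + l * b" by (simp add: algebra_simps)
    moreover have "0 \<le> l" "l \<le> 1" unfolding l_def using assms \<open>0 < b - a\<close> by auto
    ultimately show ?thesis using that by blast
  qed
  have "min (N a / (A a - N a)) (N b / (A b - N b)) \<le> N w / (A w - N w)"
    unfolding N_def
  proof (rule intersection_ratio_quasiconcave[OF _ l(1,2)])
    show "0 \<le> oy" unfolding oy_def by (rule overlap1_nonneg)
    show "(1 - l) * g a + l * g b \<le> g w"
      unfolding g_def by (rule overlap_core_concave[OF l])
    show "A w = (1 - l) * A a + l * A b"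
      unfolding A_def l(3) by (simp add: algebra_simps)
    show "0 < A u - oy * max 0 (g u)" if "u \<in> {a, b, w}" for u
      using pos[of u] that assms unfolding N_def by auto
  qed
  then show ?thesis unfolding iou_eq .
qed

lemma endpoint_minimum:
  fixes f :: "real \<Rightarrow> 'b::linorder"
  assumes "\<And>x. x \<in> {a..b} \<Longrightarrow> min (f a) (f b) \<le> f x"
  shows "\<exists>e \<in> {a, b}. \<forall>x \<in> {a..b}. f e \<le> f x"
  using assms by (cases "f a \<le> f b") (auto simp: min_def)

lemma divide_powr_mono_base_lt_1:
  fixes \<alpha> W0 c u v :: real
  assumes "0 < \<alpha>" "\<alpha> < 1" "0 < W0" "u \<le> v"
  shows "W0 / \<alpha> powr (c + u) \<le> W0 / \<alpha> powr (c + v)"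
proof -
  have "\<alpha> powr (c + v) \<le> \<alpha> powr (c + u)"
    using assms by (intro powr_mono') auto
  then show ?thesis using assms by (intro divide_left_mono) auto
qed

theorem lemma2:
  fixes \<alpha> W0 H0 bx b_y :: real and i j m n :: int
    and j1 m1 n1 i2 j2 m2 n2 :: real
  assumes "0 < \<alpha>" "\<alpha> < 1"
    and "(1 - \<alpha>) / (1 + \<alpha>) < \<alpha> powr (1/2)"
    and "0 < W0" "0 < H0"
    and "j1 \<in> {-1/2..1/2}" "m1 \<in> {-1/2..1/2}" "n1 \<in> {-1/2..1/2}"
    and "i2 \<in> {-1/2..1/2}" "j2 \<in> {-1/2..1/2}" "m2 \<in> {-1/2..1/2}" "n2 \<in> {-1/2..1/2}"
  shows "\<exists>e \<in> {-1/2, 1/2}. \<forall>i1 \<in> {-1/2..1/2}.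
           grid_iou \<alpha> W0 H0 bx b_y i j m n e j1 m1 n1 i2 j2 m2 n2
             \<le> grid_iou \<alpha> W0 H0 bx b_y i j m n i1 j1 m1 n1 i2 j2 m2 n2"
proof (rule endpoint_minimum)
  fix i1 :: real
  assume i1: "i1 \<in> {-1/2..1/2}"
  define W where "W u = W0 / \<alpha> powr (real_of_int i + u)" for u
  define di where "di = W0 / \<alpha> powr (real_of_int i) * ((1 - \<alpha>) / (1 + \<alpha>))"
  define dj where "dj = H0 / \<alpha> powr (real_of_int j) * ((1 - \<alpha>) / (1 + \<alpha>))"
  define h1 where "h1 = H0 / \<alpha> powr (real_of_int j + j1)"
  define w2 where "w2 = W0 / \<alpha> powr (real_of_int i + i2)"
  define h2 where "h2 = H0 / \<alpha> powr (real_of_int j + j2)"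
  have grid: "grid_iou \<alpha> W0 H0 bx b_y i j m n u j1 m1 n1 i2 j2 m2 n2
      = iou (bx * di + (real_of_int m + m1) * di) (b_y * dj + (real_of_int n + n1) * dj) (W u) h1
            (bx * di + (real_of_int m + m2) * di) (b_y * dj + (real_of_int n + n2) * dj) w2 h2" for u
    unfolding grid_iou_def Let_def W_def di_def dj_def h1_def w2_def h2_def ..
  have pos: "0 < h1" "0 < w2" "0 < h2"
    unfolding h1_def w2_def h2_def using assms(1,4,5) by simp_all
  have "W (-1/2) \<le> W i1" "W i1 \<le> W (1/2)"
    using i1 divide_powr_mono_base_lt_1[OF assms(1,2,4), of "-1/2" i1] divide_powr_mono_base_lt_1[OF assms(1,2,4), of i1 "1/2"]
    unfolding W_def by simp_all
  moreover have "0 < W (-1/2)" unfolding W_def using assms(1,4) by simp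
  ultimately show "min (grid_iou \<alpha> W0 H0 bx b_y i j m n (-1/2) j1 m1 n1 i2 j2 m2 n2)
      (grid_iou \<alpha> W0 H0 bx b_y i j m n (1/2) j1 m1 n1 i2 j2 m2 n2)
      \<le> grid_iou \<alpha> W0 H0 bx b_y i j m n i1 j1 m1 n1 i2 j2 m2 n2"
    unfolding grid using pos by (rule iou_width_quasiconcave)
qed

end
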